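(* Let $(S,\mathcal{E})$ be a qualitative evidence frame. Define $i,u,d:2^{\mathcal{E}}\to\tau_{\mathcal{E}}$ by $i(\emptyset)=u(\emptyset)=d(\emptyset)=S$ and, for nonempty $\mathbf{E}\subseteq\mathcal{E}$: $i(\mathbf{E})=\bigcap\mathbf{E}$, $u(\mathbf{E})=\bigcup\mathbf{E}$, and $d(\mathbf{E})$ is the least (w.r.t. inclusion) element of $\tau_{\mathbf{E}}$ that is dense in $\bigcup\mathbf{E}$ w.r.t. $\tau_{\mathbf{E}}$ (such a least element exists). Then $\{i,u,d\}$ is a set of evidence allocation functions on $(S,\mathcal{E})$.
   Context: A qualitative evidence frame is a pair $(S,\mathcal{E})$ where $S$ is a finite nonempty set and $\mathcal{E}$ is a nonempty family of subsets of $S$ with $\emptyset\notin\mathcal{E}$ and $S\notin\mathcal{E}$. For any family $\mathbf{E}\subseteq 2^S$, $\tau_{\mathbf{E}}$ denotes the topology on $S$ generated by $\mathbf{E}$ (as a subbasis): it consists of $\emptyset$, $S$, all finite intersections of members of $\mathbf{E}$, and all arbitrary unions of such finite intersections. For $\mathbf{E}\subseteq\mathcal{E}$, an element $D\in\tau_{\mathbf{E}}$ is called dense in $\bigcup\mathbf{E}$ w.r.t. $\tau_{\mathbf{E}}$ if $D\cap T\neq\emptyset$ for every nonempty $T\in\tau_{\mathbf{E}}$. A set of evidence allocation functions on $(S,\mathcal{E})$ is a set $\mathfrak{F}$ of functions $2^{\mathcal{E}}\to\tau_{\mathcal{E}}$ such that for all $f,g\in\mathfrak{F}$: (1) $f(\emptyset)=S$;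 (2) for every nonempty $\mathbf{E}\subseteq\mathcal{E}$, either $f(\mathbf{E})=\emptyset$, or $f(\mathbf{E})\in\tau_{\mathbf{E}}$ and $f(\mathbf{E})$ is dense in $\bigcup\mathbf{E}$ w.r.t. $\tau_{\mathbf{E}}$; (3) for every $\mathbf{E}\subseteq\mathcal{E}$, $f(\mathbf{E})\subseteq g(\mathbf{E})$ or $g(\mathbf{E})\subseteq f(\mathbf{E})$. *)

theory Defs
  imports Main
begin

definition qe_frame :: "'a set \<Rightarrow> 'a set set \<Rightarrow> bool" where
  "qe_frame S \<E> \<longleftrightarrow> finite S \<and> S \<noteq> {} \<and> \<E> \<subseteq> Pow S \<and> \<E> \<noteq> {} \<and> {} \<notin> \<E> \<and> S \<notin> \<E>"

definition fin_inters :: "'a set set \<Rightarrow> 'a set set" where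
  "fin_inters E = {\<Inter>F | F. finite F \<and> F \<noteq> {} \<and> F \<subseteq> E}"

definition gen_top :: "'a set \<Rightarrow> 'a set set \<Rightarrow> 'a set set" where
  "gen_top S E = {{}, S} \<union> {\<Union>B | B. B \<subseteq> fin_inters E}"

definition dense_wrt :: "'a set \<Rightarrow> 'a set set \<Rightarrow> 'a set \<Rightarrow> bool" where
  "dense_wrt S E D \<longleftrightarrow> (\<forall>T \<in> gen_top S E. T \<noteq> {} \<longrightarrow> D \<inter> T \<noteq> {})"

text \<open>A set of evidence allocation functions on (S, \<E>); functions are
  represented on all of 'a set set but only their values on subsets of \<E> matter.\<close>
definition eaf_set :: "'a set \<Rightarrow> 'a set set \<Rightarrow> ('a set set \<Rightarrow> 'a set) set \<Rightarrow> bool" where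
  "eaf_set S \<E> \<F> \<longleftrightarrow>
     (\<forall>f \<in> \<F>. (\<forall>E. E \<subseteq> \<E> \<longrightarrow> f E \<in> gen_top S \<E>)) \<and>
     (\<forall>f \<in> \<F>. f {} = S) \<and>
     (\<forall>f \<in> \<F>. \<forall>E. E \<subseteq> \<E> \<and> E \<noteq> {} \<longrightarrow>
        f E = {} \<or> (f E \<in> gen_top S E \<and> dense_wrt S E (f E))) \<and>
     (\<forall>f \<in> \<F>. \<forall>g \<in> \<F>. \<forall>E. E \<subseteq> \<E> \<longrightarrow> f E \<subseteq> g E \<or> g E \<subseteq> f E)"

definition least_dense :: "'a set \<Rightarrow> 'a set set \<Rightarrow> 'a set \<Rightarrow> bool" where
  "least_dense S E D \<longleftrightarrow> D \<in> gen_top S E \<and> dense_wrt S E D \<and>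
     (\<forall>D'. D' \<in> gen_top S E \<and> dense_wrt S E D' \<longrightarrow> D \<subseteq> D')"

definition i_alloc :: "'a set \<Rightarrow> 'a set set \<Rightarrow> 'a set" where
  "i_alloc S E = (if E = {} then S else \<Inter>E)"

definition u_alloc :: "'a set \<Rightarrow> 'a set set \<Rightarrow> 'a set" where
  "u_alloc S E = (if E = {} then S else \<Union>E)"

definition d_alloc :: "'a set \<Rightarrow> 'a set set \<Rightarrow> 'a set" where
  "d_alloc S E = (if E = {} then S else (THE D. least_dense S E D))"

end

theory Submission
  imports Defs
begin

text \<open>Call the nonempty finite intersections of members of \<open>E\<close> basic sets. When \<open>E\<close> is
  finite, every nonempty basic set contains an inclusion-minimal one, and a minimal basic set
  \<open>M\<close> lies inside every open dense set \<open>D\<close>: \<open>D\<close> meets \<open>M\<close>, so some basic set \<open>b \<subseteq> D\<close> meets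
  \<open>M\<close>, and by minimality \<open>b \<inter> M = M\<close>. Hence the union of the minimal basic sets is the least
  open dense set. The remaining conditions are comparisons: \<open>\<Inter>E \<subseteq> \<Union>E\<close>, both \<open>\<Union>E\<close> and (when
  nonempty) \<open>\<Inter>E\<close> are open dense, so the least open dense set lies below them, and otherwise
  \<open>\<Inter>E = {}\<close> lies below everything.\<close>

definition min_fin_inters :: "'a set set \<Rightarrow> 'a set set" where
  "min_fin_inters E = {M \<in> fin_inters E. M \<noteq> {} \<and>
     (\<forall>M' \<in> fin_inters E. M' \<noteq> {} \<longrightarrow> M' \<subseteq> M \<longrightarrow> M' = M)}"

lemma fin_inters_Int:
  assumes "A \<in> fin_inters E" "B \<in> fin_inters E"
  shows "A \<inter> B \<in> fin_inters E"
proof -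
  obtain F where "A = \<Inter>F" "finite F" "F \<noteq> {}" "F \<subseteq> E"
    using assms(1) unfolding fin_inters_def by blast
  moreover obtain G where "B = \<Inter>G" "finite G" "G \<noteq> {}" "G \<subseteq> E"
    using assms(2) unfolding fin_inters_def by blast
  ultimately have "A \<inter> B = \<Inter>(F \<union> G) \<and> finite (F \<union> G) \<and> F \<union> G \<noteq> {} \<and> F \<union> G \<subseteq> E"
    by auto
  then show ?thesis
    unfolding fin_inters_def by blast
qed

lemma fin_inters_subset_Union: "N \<in> fin_inters E \<Longrightarrow> N \<subseteq> \<Union>E"
  unfolding fin_inters_def by blast

lemma Inter_subset_fin_inters: "N \<in> fin_inters E \<Longrightarrow> \<Inter>E \<subseteq> N"
  unfolding fin_inters_def by blast

lemma member_fin_inters: "e \<in> E \<Longrightarrow> e \<in> fin_inters E"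
  unfolding fin_inters_def by (intro CollectI exI[of _ "{e}"]) simp

lemma Inter_fin_inters: "finite E \<Longrightarrow> E \<noteq> {} \<Longrightarrow> \<Inter>E \<in> fin_inters E"
  unfolding fin_inters_def by blast

lemma fin_inters_mono: "E \<subseteq> E' \<Longrightarrow> fin_inters E \<subseteq> fin_inters E'"
  unfolding fin_inters_def by blast

lemma finite_fin_inters: "finite E \<Longrightarrow> finite (fin_inters E)"
proof -
  assume "finite E"
  moreover have "fin_inters E \<subseteq> Inter ` Pow E"
    unfolding fin_inters_def by blast
  ultimately show ?thesis
    by (meson finite_Pow_iff finite_imageI finite_subset)
qed

lemma top_in_gen_top [simp]: "S \<in> gen_top S E"
  and empty_in_gen_top [simp]: "{} \<in> gen_top S E"
  unfolding gen_top_def by simp_all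

lemma Union_in_gen_top: "B \<subseteq> fin_inters E \<Longrightarrow> \<Union>B \<in> gen_top S E"
  unfolding gen_top_def by blast

lemma fin_inters_in_gen_top: "N \<in> fin_inters E \<Longrightarrow> N \<in> gen_top S E"
  using Union_in_gen_top[of "{N}"] by simp

lemma gen_topE:
  assumes "T \<in> gen_top S E"
  obtains "T = {}" | "T = S" | B where "T = \<Union>B" "B \<subseteq> fin_inters E"
  using assms unfolding gen_top_def by blast

lemma gen_top_mono:
  assumes "E \<subseteq> E'" "T \<in> gen_top S E"
  shows "T \<in> gen_top S E'"
  using assms(2)
proof (cases rule: gen_topE)
  case (3 B)
  then show ?thesis
    using fin_inters_mono[OF assms(1)] Union_in_gen_top by (metis subset_trans)
qed simp_all

lemma dense_wrtI:
  assumes "D \<inter> S \<noteq> {}" "\<And>N. N \<in> fin_inters E \<Longrightarrow> N \<noteq> {} \<Longrightarrow> D \<inter> N \<noteq> {}"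
  shows "dense_wrt S E D"
  unfolding dense_wrt_def
proof (intro ballI impI)
  fix T
  assume "T \<in> gen_top S E" "T \<noteq> {}"
  then show "D \<inter> T \<noteq> {}"
  proof (cases rule: gen_topE)
    case (3 B)
    then obtain N where "N \<in> B" "N \<noteq> {}"
      using \<open>T \<noteq> {}\<close> by blast
    then show ?thesis
      using 3 assms(2) by blast
  qed (use assms(1) in simp_all)
qed

lemma dense_wrtD: "dense_wrt S E D \<Longrightarrow> N \<in> fin_inters E \<Longrightarrow> N \<noteq> {} \<Longrightarrow> D \<inter> N \<noteq> {}"
  unfolding dense_wrt_def using fin_inters_in_gen_top by blast

lemma Inter_dense:
  assumes "E \<subseteq> Pow S" "E \<noteq> {}" "\<Inter>E \<noteq> {}"
  shows "dense_wrt S E (\<Inter>E)"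
  using assms Inter_subset_fin_inters by (intro dense_wrtI) blast+

lemma Union_dense:
  assumes "E \<subseteq> Pow S" "\<Union>E \<noteq> {}"
  shows "dense_wrt S E (\<Union>E)"
  using assms fin_inters_subset_Union by (intro dense_wrtI) blast+

lemma min_fin_inters_fin_inters: "M \<in> min_fin_inters E \<Longrightarrow> M \<in> fin_inters E"
  and min_fin_inters_nonempty: "M \<in> min_fin_inters E \<Longrightarrow> M \<noteq> {}"
  unfolding min_fin_inters_def by simp_all

lemma min_fin_inters_subset:
  assumes "finite E" "N \<in> fin_inters E" "N \<noteq> {}"
  obtains M where "M \<in> min_fin_inters E" "M \<subseteq> N"
proof -
  let ?A = "{M \<in> fin_inters E. M \<noteq> {}}"
  have "finite ?A"
    using finite_fin_inters[OF assms(1)] by simp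
  moreover have "N \<in> ?A"
    using assms(2,3) by simp
  ultimately obtain M where "M \<in> ?A" "M \<subseteq> N" "\<forall>M' \<in> ?A. M' \<subseteq> M \<longrightarrow> M = M'"
    by (meson finite_has_minimal2)
  then have "M \<in> min_fin_inters E"
    unfolding min_fin_inters_def by blast
  then show ?thesis
    using that \<open>M \<subseteq> N\<close> by blast
qed

lemma min_fin_inters_subset_dense:
  assumes "E \<subseteq> Pow S" "M \<in> min_fin_inters E" "D \<in> gen_top S E" "dense_wrt S E D"
  shows "M \<subseteq> D"
proof -
  have M: "M \<in> fin_inters E" "M \<noteq> {}"
    and minimal: "\<And>M'. M' \<in> fin_inters E \<Longrightarrow> M' \<noteq> {} \<Longrightarrow> M' \<subseteq> M \<Longrightarrow> M' = M"
    using assms(2) unfolding min_fin_inters_def by auto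
  have meets: "D \<inter> M \<noteq> {}"
    using dense_wrtD[OF assms(4) M] by blast
  from assms(3) show ?thesis
  proof (cases rule: gen_topE)
    case 1
    then show ?thesis
      using meets by blast
  next
    case 2
    then show ?thesis
      using fin_inters_subset_Union[OF M(1)] assms(1) by blast
  next
    case (3 B)
    then obtain b where b: "b \<in> B" "b \<inter> M \<noteq> {}"
      using meets by blast
    then have "b \<inter> M \<in> fin_inters E"
      using 3 M(1) fin_inters_Int by blast
    then have "b \<inter> M = M"
      using minimal b(2) by blast
    then show ?thesis
      using 3 b(1) by blast
  qed
qed

lemma least_dense_Union_min_fin_inters:
  assumes "finite E" "E \<subseteq> Pow S" "\<Union>E \<noteq> {}"
  shows "least_dense S E (\<Union>(min_fin_inters E))"
  unfolding least_dense_def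
proof (intro conjI allI impI)
  show "\<Union>(min_fin_inters E) \<in> gen_top S E"
    using min_fin_inters_fin_inters by (intro Union_in_gen_top) blast
  have meets: "\<Union>(min_fin_inters E) \<inter> N \<noteq> {}" if N: "N \<in> fin_inters E" "N \<noteq> {}" for N
  proof -
    obtain M where "M \<in> min_fin_inters E" "M \<subseteq> N"
      using min_fin_inters_subset[OF assms(1) N] .
    then show ?thesis
      using min_fin_inters_nonempty by blast
  qed
  obtain e where "e \<in> E" "e \<noteq> {}"
    using assms(3) by blast
  then have "\<Union>(min_fin_inters E) \<inter> e \<noteq> {}"
    using meets member_fin_inters by blast
  then have "\<Union>(min_fin_inters E) \<inter> S \<noteq> {}"
    using \<open>e \<in> E\<close> assms(2) by blast
  then show "dense_wrt S E (\<Union>(min_fin_inters E))"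
    using meets by (rule dense_wrtI)
  show "\<Union>(min_fin_inters E) \<subseteq> D" if "D \<in> gen_top S E \<and> dense_wrt S E D" for D
    using min_fin_inters_subset_dense[OF assms(2) _ conjunct1[OF that] conjunct2[OF that]] by blast
qed

lemma least_dense_unique: "least_dense S E D \<Longrightarrow> least_dense S E D' \<Longrightarrow> D = D'"
  unfolding least_dense_def by blast

lemma d_alloc_eq_Union_min_fin_inters:
  assumes "finite E" "E \<subseteq> Pow S" "\<Union>E \<noteq> {}"
  shows "d_alloc S E = \<Union>(min_fin_inters E)"
proof -
  note least = least_dense_Union_min_fin_inters[OF assms]
  have "(THE D. least_dense S E D) = \<Union>(min_fin_inters E)"
    using least least_dense_unique[OF _ least] by (rule the_equality)
  then show ?thesis
    using assms(3) unfolding d_alloc_def by auto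
qed

lemma least_dense_d_alloc:
  assumes "finite E" "E \<subseteq> Pow S" "\<Union>E \<noteq> {}"
  shows "least_dense S E (d_alloc S E)"
  using least_dense_Union_min_fin_inters[OF assms] d_alloc_eq_Union_min_fin_inters[OF assms] by simp

lemma alloc_open_dense:
  assumes "finite E" "E \<subseteq> Pow S" "E \<noteq> {}" "{} \<notin> E"
    and "f \<in> {i_alloc S, u_alloc S, d_alloc S}"
  shows "f E = {} \<or> (f E \<in> gen_top S E \<and> dense_wrt S E (f E))"
proof -
  have "\<Union>E \<noteq> {}"
    using assms(3,4) by auto
  have "E \<subseteq> fin_inters E"
    using member_fin_inters by blast
  then have u: "u_alloc S E \<in> gen_top S E \<and> dense_wrt S E (u_alloc S E)"
    using Union_in_gen_top Union_dense[OF assms(2) \<open>\<Union>E \<noteq> {}\<close>] assms(3)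
    by (simp add: u_alloc_def)
  have i: "i_alloc S E = {} \<or> (i_alloc S E \<in> gen_top S E \<and> dense_wrt S E (i_alloc S E))"
    using fin_inters_in_gen_top[OF Inter_fin_inters[OF assms(1,3)]] Inter_dense[OF assms(2,3)] assms(3)
    unfolding i_alloc_def by auto
  have d: "d_alloc S E \<in> gen_top S E \<and> dense_wrt S E (d_alloc S E)"
    using least_dense_d_alloc[OF assms(1,2) \<open>\<Union>E \<noteq> {}\<close>] unfolding least_dense_def by blast
  from assms(5) show ?thesis
    by (elim insertE emptyE) (use i u d in simp_all)
qed

lemma alloc_in_gen_top:
  assumes "finite E" "E \<subseteq> Pow S" "{} \<notin> E" "f \<in> {i_alloc S, u_alloc S, d_alloc S}"
  shows "f E \<in> gen_top S E"
proof (cases "E = {}")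
  case True
  then show ?thesis
    using assms(4) unfolding i_alloc_def u_alloc_def d_alloc_def by auto
next
  case False
  then show ?thesis
    using alloc_open_dense[OF assms(1,2) False assms(3,4)] by auto
qed

lemma alloc_comparable:
  assumes "finite E" "E \<subseteq> Pow S" "{} \<notin> E"
    and "f \<in> {i_alloc S, u_alloc S, d_alloc S}" "g \<in> {i_alloc S, u_alloc S, d_alloc S}"
  shows "f E \<subseteq> g E \<or> g E \<subseteq> f E"
proof (cases "E = {}")
  case True
  then show ?thesis
    using assms(4,5) unfolding i_alloc_def u_alloc_def d_alloc_def by auto
next
  case False
  then have "\<Union>E \<noteq> {}"
    using assms(3) by auto
  have least: "d_alloc S E \<subseteq> D" if "D \<in> gen_top S E" "dense_wrt S E D" for D
    using least_dense_d_alloc[OF assms(1,2) \<open>\<Union>E \<noteq> {}\<close>] that unfolding least_dense_def by blast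
  have "i_alloc S E \<subseteq> u_alloc S E"
    using False unfolding i_alloc_def u_alloc_def by auto
  moreover have "d_alloc S E \<subseteq> u_alloc S E"
    using alloc_open_dense[OF assms(1,2) False assms(3), of "u_alloc S"] False \<open>\<Union>E \<noteq> {}\<close> least
    unfolding u_alloc_def by auto
  moreover have "d_alloc S E \<subseteq> i_alloc S E \<or> i_alloc S E \<subseteq> d_alloc S E"
    using alloc_open_dense[OF assms(1,2) False assms(3), of "i_alloc S"] least by auto
  ultimately show ?thesis
    using assms(4,5) by auto
qed

theorem corollary2:
  fixes S :: "'a set" and \<E> :: "'a set set"
  assumes "qe_frame S \<E>"
  shows "(\<forall>E. E \<subseteq> \<E> \<and> E \<noteq> {} \<longrightarrow> (\<exists>D. least_dense S E D))
         \<and> eaf_set S \<E> {i_alloc S, u_alloc S, d_alloc S}"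
proof -
  have frame: "finite E" "E \<subseteq> Pow S" "{} \<notin> E" if "E \<subseteq> \<E>" for E
    using assms that finite_subset[of E "Pow S"] unfolding qe_frame_def by auto
  have least: "least_dense S E (d_alloc S E)" if "E \<subseteq> \<E>" "E \<noteq> {}" for E
    by (rule least_dense_d_alloc[OF frame(1,2)[OF that(1)]]) (use frame(3)[OF that(1)] that(2) in auto)
  have in_gen_top: "f E \<in> gen_top S \<E>" if "f \<in> {i_alloc S, u_alloc S, d_alloc S}" "E \<subseteq> \<E>" for f E
    using gen_top_mono[OF that(2) alloc_in_gen_top[OF frame[OF that(2)] that(1)]] .
  have at_empty: "f {} = S" if "f \<in> {i_alloc S, u_alloc S, d_alloc S}" for f
    using that unfolding i_alloc_def u_alloc_def d_alloc_def by auto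
  have open_dense: "f E = {} \<or> (f E \<in> gen_top S E \<and> dense_wrt S E (f E))"
    if "f \<in> {i_alloc S, u_alloc S, d_alloc S}" "E \<subseteq> \<E>" "E \<noteq> {}" for f E
    using alloc_open_dense[OF frame(1,2)[OF that(2)] that(3) frame(3)[OF that(2)] that(1)] .
  have comparable: "f E \<subseteq> g E \<or> g E \<subseteq> f E"
    if "f \<in> {i_alloc S, u_alloc S, d_alloc S}" "g \<in> {i_alloc S, u_alloc S, d_alloc S}" "E \<subseteq> \<E>"
    for f g E
    using alloc_comparable[OF frame[OF that(3)] that(1,2)] .
  show ?thesis
    unfolding eaf_set_def
    by (intro conjI allI ballI impI; (elim conjE)?) (metis least in_gen_top at_empty open_dense comparable)+
qed

end
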